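(* Let $n\ge k\ge 2$ and $r\ge 0$ be integers. Then for every real $\alpha>1$, \[ \mathsf{opt}_{\operatorname{bandit}}^{\operatorname{det}}(n,k,r)\le \frac{\alpha}{\alpha-1}\,k\ln\!\left(\frac{n\alpha^r}{k}\right)+k-1. \]
   Context: Prediction with expert advice: $\mathcal{Y}=\{1,\dots,k\}$, $\mathcal{X}=[k]^n$, experts $h_i(x)=x_i$, $i=1,\dots,n$. $\mathcal{P}_r$ is the set of finite sequences of examples in $\mathcal{X}\times\mathcal{Y}$ on which some $h_i$ errs on at most $r$ examples. Bandit feedback: each round the adversary presents $x_t$, a deterministic learner predicts $\hat y_t$ as a function of past observations and $x_t$, and learns only whether $\hat y_t$ equals the true label $y_t$. $\mathsf{opt}_{\operatorname{bandit}}^{\operatorname{det}}(n,k,r)$ is the infimum over deterministic learners of the supremum over $S\in\mathcal{P}_r$ of the number of mistakes ($\hat y_t\ne y_t$). *)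

theory Defs
  imports Complex_Main "HOL-Library.Extended_Real"
begin

(* Instances x in X = [k]^n are lists of length n with entries in {1..k};
   expert i (0-based, i < n) predicts x ! i.  Labels are in {1..k}. *)

definition instances :: "nat \<Rightarrow> nat \<Rightarrow> nat list set" where
  "instances n k = {x. length x = n \<and> set x \<subseteq> {1..k}}"

type_synonym example = "nat list \<times> nat"

(* observation of a past round: instance, own prediction, whether it was correct *)
type_synonym obs = "nat list \<times> nat \<times> bool"

type_synonym learner = "obs list \<Rightarrow> nat list \<Rightarrow> nat"

definition learners :: "nat \<Rightarrow> learner set" where
  "learners k = {L. \<forall>h x. L h x \<in> {1..k}}"

fun mistakes :: "learner \<Rightarrow> obs list \<Rightarrow> example list \<Rightarrow> nat" where
  "mistakes L h [] = 0"
| "mistakes L h ((x, y) # S) =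
     (let p = L h x in (if p = y then 0 else 1) + mistakes L (h @ [(x, p, p = y)]) S)"

definition expert_errors :: "nat \<Rightarrow> example list \<Rightarrow> nat" where
  "expert_errors i S = card {t. t < length S \<and> fst (S ! t) ! i \<noteq> snd (S ! t)}"

definition realizable_seqs :: "nat \<Rightarrow> nat \<Rightarrow> nat \<Rightarrow> example list set" where
  "realizable_seqs n k r =
     {S. (\<forall>(x, y) \<in> set S. x \<in> instances n k \<and> y \<in> {1..k})
         \<and> (\<exists>i<n. expert_errors i S \<le> r)}"

definition opt_bandit_det :: "nat \<Rightarrow> nat \<Rightarrow> nat \<Rightarrow> ereal" where
  "opt_bandit_det n k r =
     (INF L \<in> learners k. SUP S \<in> realizable_seqs n k r. ereal (real (mistakes L [] S)))"

end

(* The learner runs a weighted majority vote over the experts not yet known to have erred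
   more than r times, an expert with e known errors having weight \<alpha>^(r - e).  After a
   wrong prediction every expert that voted for it is known to have erred.  The survivors
   vote for at most m = min k (number of survivors) labels, so the wrong label carried at
   least a 1/m fraction of the total weight z; this part is divided by \<alpha>, except for the
   weight 1 of experts that are thereby eliminated.  Hence the potential
   \<alpha>/(\<alpha>-1) m ln (z/m) + m - 1 drops by at least 1 with every mistake; it is unchanged by
   correct predictions, stays nonnegative as long as the best expert survives, and
   initially equals the claimed bound. *)

theory Submission
  imports Defs
begin

lemma ln_le_ln_add_div_minus_one:
  fixes y u :: real
  assumes "0 < y" and "0 < u"
  shows "ln y \<le> ln u + y / u - 1"
  using ln_le_minus_one[of "y / u"] assms by (simp add: ln_divide_pos)

definition mistake_bound :: "real \<Rightarrow> real \<Rightarrow> real \<Rightarrow> real" where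
  "mistake_bound \<alpha> m z = \<alpha> / (\<alpha> - 1) * m * ln (z / m) + m - 1"

lemma mistake_bound_nonneg:
  assumes "1 < \<alpha>" and "1 \<le> m" and "m \<le> z"
  shows "0 \<le> mistake_bound \<alpha> m z"
proof -
  have "0 \<le> ln (z / m)" using assms by simp
  moreover have "0 \<le> \<alpha> / (\<alpha> - 1) * m" using assms by simp
  ultimately show ?thesis
    unfolding mistake_bound_def using assms(2) mult_nonneg_nonneg by fastforce
qed

lemma diff_div_le_mult_ln:
  fixes \<alpha> j d u :: real
  assumes "1 < \<alpha>" and "0 \<le> j" and "j \<le> d" and "1 \<le> u"
  shows "j / \<alpha> - d / (\<alpha> * u) \<le> j * ln u"
proof -
  have "j / (\<alpha> * u) \<le> d / (\<alpha> * u)"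
    using assms by (intro divide_right_mono) simp_all
  moreover have "j / \<alpha> * (1 - 1 / u) = j / \<alpha> - j / (\<alpha> * u)"
    using assms by (simp add: field_simps)
  ultimately have "j / \<alpha> - d / (\<alpha> * u) \<le> j / \<alpha> * (1 - 1 / u)"
    by linarith
  also have "\<dots> \<le> j * (1 - 1 / u)"
    using assms by (intro mult_right_mono) (simp_all add: divide_le_eq mult_le_cancel_left1)
  also have "\<dots> \<le> j * ln u"
    using ln_le_ln_add_div_minus_one[of 1 u] assms by (intro mult_left_mono) simp_all
  finally show ?thesis .
qed

(* m, z: capped survivor count and total weight before a mistake; m', z': after it;
   d: number of experts it eliminates. *)
lemma mistake_bound_decrease:
  fixes \<alpha> m m' d z z' :: real
  assumes \<alpha>: "1 < \<alpha>" and m': "1 \<le> m'" "m' \<le> m" "m - m' \<le> d"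
    and z: "m \<le> z" "0 < z'" "z' \<le> z - (1 - 1 / \<alpha>) * z / m - d / \<alpha>"
  shows "mistake_bound \<alpha> m' z' + 1 \<le> mistake_bound \<alpha> m z"
proof -
  define u where "u = z / m"
  define c where "c = 1 - 1 / \<alpha>"
  have u: "1 \<le> u" using z m' by (simp add: u_def)
  have c: "0 < c" "c * (\<alpha> / (\<alpha> - 1)) = 1" using \<alpha> by (simp_all add: c_def field_simps)
  have tangent: "m' * ln (z' / m') \<le> m' * ln u + z' / u - m'"
    using ln_le_ln_add_div_minus_one[of "z' / m'" u] z m' u by (simp add: field_simps)
  have "z' / u \<le> (z - c * u - d / \<alpha>) / u"
    using z u by (intro divide_right_mono) (simp_all add: u_def c_def)
  also have "\<dots> = m - c - d / (\<alpha> * u)"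
    using m' u by (simp add: u_def field_simps)
  finally have z'_div_u: "z' / u \<le> m - c - d / (\<alpha> * u)" .
  have "c * (mistake_bound \<alpha> m' z' + 1) = c * (\<alpha> / (\<alpha> - 1)) * (m' * ln (z' / m')) + c * m'"
    by (simp add: mistake_bound_def algebra_simps)
  also have "\<dots> = m' * ln (z' / m') + c * m'"
    unfolding c(2) by simp
  also have "\<dots> \<le> m * ln u + c * m - c"
  proof -
    have "c * m = m - m / \<alpha>" "c * m' = m' - m' / \<alpha>" "(m - m') / \<alpha> = m / \<alpha> - m' / \<alpha>"
      "(m - m') * ln u = m * ln u - m' * ln u"
      by (simp_all add: c_def algebra_simps diff_divide_distrib)
    then show ?thesis
      using tangent z'_div_u diff_div_le_mult_ln[of \<alpha> "m - m'" d u] \<alpha> m' u by linarith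
  qed
  also have "\<dots> = c * (\<alpha> / (\<alpha> - 1)) * (m * ln u) + c * m - c"
    unfolding c(2) by simp
  also have "\<dots> = c * mistake_bound \<alpha> m z"
    by (simp add: mistake_bound_def u_def algebra_simps)
  finally show ?thesis using c(1) by simp
qed

lemma arg_max_on_finite:
  fixes f :: "'a \<Rightarrow> 'b::linorder"
  assumes "finite S" and "S \<noteq> {}"
  shows "arg_max_on f S \<in> S \<and> (\<forall>y\<in>S. f y \<le> f (arg_max_on f S))"
proof -
  have "Max (f ` S) \<in> f ` S" using assms by simp
  then obtain x where "x \<in> S" "f x = Max (f ` S)" by auto
  then have "x \<in> S" "\<And>y. y \<in> S \<Longrightarrow> \<not> f x < f y"
    using assms(1) by (auto simp: not_less)
  then show ?thesis
    unfolding arg_max_on_def by (rule arg_maxI) (auto simp: not_less)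
qed

lemma sum_le_card_image_mult:
  fixes w :: "'a \<Rightarrow> real" and W :: real
  assumes "finite A" and "\<And>q. q \<in> f ` A \<Longrightarrow> (\<Sum>i | i \<in> A \<and> f i = q. w i) \<le> W"
  shows "(\<Sum>i\<in>A. w i) \<le> real (card (f ` A)) * W"
proof -
  have "(\<Sum>i\<in>A. w i) = (\<Sum>q\<in>f ` A. \<Sum>i | i \<in> A \<and> f i = q. w i)"
    using assms(1) by (rule sum.image_gen)
  also have "\<dots> \<le> real (card (f ` A)) * W"
    using assms(2) by (rule sum_bounded_above)
  finally show ?thesis .
qed

(* A wrong prediction p reveals exactly that the experts predicting p erred; a correct
   one reveals no error of any expert. *)
definition known_errors :: "obs list \<Rightarrow> nat \<Rightarrow> nat" where
  "known_errors h i = length (filter (\<lambda>(x, p, b). \<not> b \<and> x ! i = p) h)"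

definition survivors :: "nat \<Rightarrow> nat \<Rightarrow> (nat \<Rightarrow> nat) \<Rightarrow> nat set" where
  "survivors n r e = {i. i < n \<and> e i \<le> r}"

definition weight :: "real \<Rightarrow> nat \<Rightarrow> (nat \<Rightarrow> nat) \<Rightarrow> nat \<Rightarrow> real" where
  "weight \<alpha> r e i = \<alpha> ^ (r - e i)"

definition vote :: "real \<Rightarrow> nat \<Rightarrow> nat \<Rightarrow> (nat \<Rightarrow> nat) \<Rightarrow> nat list \<Rightarrow> nat \<Rightarrow> real" where
  "vote \<alpha> n r e x p = (\<Sum>i | i \<in> survivors n r e \<and> x ! i = p. weight \<alpha> r e i)"

definition total_weight :: "real \<Rightarrow> nat \<Rightarrow> nat \<Rightarrow> (nat \<Rightarrow> nat) \<Rightarrow> real" where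
  "total_weight \<alpha> n r e = (\<Sum>i\<in>survivors n r e. weight \<alpha> r e i)"

definition weighted_majority :: "real \<Rightarrow> nat \<Rightarrow> nat \<Rightarrow> nat \<Rightarrow> learner" where
  "weighted_majority \<alpha> n k r h x = arg_max_on (vote \<alpha> n r (known_errors h) x) {1..k}"

definition potential :: "real \<Rightarrow> nat \<Rightarrow> nat \<Rightarrow> nat \<Rightarrow> (nat \<Rightarrow> nat) \<Rightarrow> real" where
  "potential \<alpha> n k r e =
     mistake_bound \<alpha> (real (min k (card (survivors n r e)))) (total_weight \<alpha> n r e)"

lemma known_errors_Nil [simp]: "known_errors [] = (\<lambda>i. 0)"
  by (simp add: known_errors_def fun_eq_iff)

lemma known_errors_append_correct [simp]: "known_errors (h @ [(x, p, True)]) = known_errors h"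
  by (simp add: known_errors_def fun_eq_iff)

lemma known_errors_append_wrong [simp]:
  "known_errors (h @ [(x, p, False)]) = (\<lambda>i. known_errors h i + (if x ! i = p then 1 else 0))"
  by (simp add: known_errors_def fun_eq_iff)

lemma weighted_majority_spec:
  assumes "1 \<le> k"
  shows "weighted_majority \<alpha> n k r h x \<in> {1..k}"
    and "q \<in> {1..k} \<Longrightarrow>
      vote \<alpha> n r (known_errors h) x q \<le> vote \<alpha> n r (known_errors h) x (weighted_majority \<alpha> n k r h x)"
  using arg_max_on_finite[of "{1..k}" "vote \<alpha> n r (known_errors h) x"] assms
  by (auto simp: weighted_majority_def)

lemma finite_survivors [simp]: "finite (survivors n r e)"
  by (simp add: survivors_def)

lemma card_survivors_le_total_weight:
  assumes "1 < \<alpha>"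
  shows "real (card (survivors n r e)) \<le> total_weight \<alpha> n r e"
  unfolding total_weight_def weight_def
  using sum_mono[of "survivors n r e" "\<lambda>_. 1::real" "\<lambda>i. \<alpha> ^ (r - e i)"] assms by simp

lemma potential_nonneg:
  assumes "1 < \<alpha>" and "1 \<le> k" and "survivors n r e \<noteq> {}"
  shows "0 \<le> potential \<alpha> n k r e"
proof -
  have "1 \<le> card (survivors n r e)"
    using assms(3) by (simp add: Suc_le_eq card_gt_0_iff)
  then show ?thesis
    unfolding potential_def using assms card_survivors_le_total_weight[OF assms(1), of n r e]
    by (intro mistake_bound_nonneg) auto
qed

lemma potential_initial:
  assumes "k \<le> n"
  shows "potential \<alpha> n k r (\<lambda>i. 0) = mistake_bound \<alpha> k (n * \<alpha> ^ r)"
proof -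
  have "survivors n r (\<lambda>i. 0) = {..<n}" by (auto simp: survivors_def)
  then show ?thesis using assms by (simp add: potential_def total_weight_def weight_def)
qed

lemma survivors_after_mistake:
  "survivors n r (\<lambda>i. e i + (if x ! i = p then 1 else 0)) =
     survivors n r e - {i. x ! i = p \<and> e i = r}"
  by (auto simp: survivors_def)

lemma total_weight_after_mistake:
  fixes \<alpha> :: real and n r p :: nat and e :: "nat \<Rightarrow> nat" and x :: "nat list"
  defines "e' \<equiv> \<lambda>i. e i + (if x ! i = p then 1 else 0)"
    and "D \<equiv> {i \<in> survivors n r e. x ! i = p \<and> e i = r}"
  assumes "\<alpha> \<noteq> 0"
  shows "total_weight \<alpha> n r e' =
    total_weight \<alpha> n r e - vote \<alpha> n r e x p + (vote \<alpha> n r e x p - card D) / \<alpha>"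
proof -
  define A where "A = survivors n r e"
  define G where "G = {i \<in> A. x ! i = p}"
  have fin: "finite A" "finite G" "D \<subseteq> G" "G \<subseteq> A"
    by (auto simp: A_def G_def D_def)
  have survivors': "survivors n r e' = (A - G) \<union> (G - D)"
    by (auto simp: e'_def survivors_after_mistake A_def G_def D_def)
  have "total_weight \<alpha> n r e' = (\<Sum>i\<in>A - G. weight \<alpha> r e' i) + (\<Sum>i\<in>G - D. weight \<alpha> r e' i)"
    unfolding total_weight_def survivors' using fin by (intro sum.union_disjoint) auto
  also have "(\<Sum>i\<in>A - G. weight \<alpha> r e' i) = (\<Sum>i\<in>A - G. weight \<alpha> r e i)"
    by (intro sum.cong) (auto simp: weight_def e'_def G_def)
  also have "\<dots> = total_weight \<alpha> n r e - vote \<alpha> n r e x p"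
    using fin by (simp add: sum_diff total_weight_def vote_def A_def G_def)
  also have "(\<Sum>i\<in>G - D. weight \<alpha> r e' i) = (\<Sum>i\<in>G - D. weight \<alpha> r e i / \<alpha>)"
  proof (intro sum.cong)
    fix i assume "i \<in> G - D"
    then have "e i < r" "x ! i = p" by (auto simp: G_def D_def A_def survivors_def)
    then show "weight \<alpha> r e' i = weight \<alpha> r e i / \<alpha>"
      using assms(3) by (simp add: weight_def e'_def power_diff)
  qed simp
  also have "\<dots> = (vote \<alpha> n r e x p - card D) / \<alpha>"
    using fin by (simp add: sum_divide_distrib[symmetric] sum_diff vote_def A_def G_def
      weight_def D_def)
  finally show ?thesis .
qed

lemma total_weight_le_mult_max_vote:
  assumes "0 < \<alpha>" and "\<forall>i<n. x ! i \<in> {1..k}"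
    and "\<forall>q\<in>{1..k}. vote \<alpha> n r e x q \<le> vote \<alpha> n r e x p"
  shows "total_weight \<alpha> n r e \<le> min k (card (survivors n r e)) * vote \<alpha> n r e x p"
proof -
  let ?A = "survivors n r e" and ?W = "vote \<alpha> n r e x p"
  have labels: "(\<lambda>i. x ! i) ` ?A \<subseteq> {1..k}"
    using assms(2) by (auto simp: survivors_def)
  then have "total_weight \<alpha> n r e \<le> real (card ((\<lambda>i. x ! i) ` ?A)) * ?W"
    unfolding total_weight_def using assms(3)
    by (intro sum_le_card_image_mult) (auto simp: vote_def)
  also have "\<dots> \<le> min k (card ?A) * ?W"
  proof (intro mult_right_mono)
    show "real (card ((\<lambda>i. x ! i) ` ?A)) \<le> real (min k (card ?A))"
      using card_mono[OF _ labels] card_image_le[of ?A] by simp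
    show "0 \<le> ?W"
      using assms(1) by (simp add: vote_def weight_def sum_nonneg)
  qed
  finally show ?thesis .
qed

lemma potential_after_mistake:
  fixes \<alpha> :: real and n k r p :: nat and e :: "nat \<Rightarrow> nat" and x :: "nat list"
  defines "e' \<equiv> \<lambda>i. e i + (if x ! i = p then 1 else 0)"
  assumes \<alpha>: "1 < \<alpha>" and k: "1 \<le> k" and labels: "\<forall>i<n. x ! i \<in> {1..k}"
    and p_max: "\<forall>q\<in>{1..k}. vote \<alpha> n r e x q \<le> vote \<alpha> n r e x p"
    and "survivors n r e' \<noteq> {}"
  shows "potential \<alpha> n k r e' + 1 \<le> potential \<alpha> n k r e"
proof -
  define D where "D = {i \<in> survivors n r e. x ! i = p \<and> e i = r}"
  define A where "A = card (survivors n r e)"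
  define z where "z = total_weight \<alpha> n r e"
  define W where "W = vote \<alpha> n r e x p"
  define m where "m = real (min k A)"
  define m' where "m' = real (min k (A - card D))"
  have card': "card (survivors n r e') = A - card D"
    unfolding e'_def survivors_after_mistake A_def D_def
    by (subst card_Diff_subset[symmetric]) (auto intro: arg_cong[where f = card])
  then have "1 \<le> A - card D"
    using assms(6) by (metis One_nat_def Suc_le_eq card_gt_0_iff finite_survivors)
  moreover have "card D \<le> A"
    unfolding A_def D_def by (intro card_mono) auto
  ultimately have m': "1 \<le> m'" "m' \<le> m" "m - m' \<le> card D"
    using k by (auto simp: m_def m'_def)
  have z: "m \<le> z"
    using card_survivors_le_total_weight[OF \<alpha>, of n r e] by (simp add: m_def z_def A_def)
  have "z \<le> m * W"
    using total_weight_le_mult_max_vote[of \<alpha> n x k r e p] \<alpha> labels p_max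
    by (simp add: z_def m_def W_def A_def)
  then have "(1 - 1 / \<alpha>) * (z / m) \<le> (1 - 1 / \<alpha>) * W"
    using \<alpha> m' by (intro mult_left_mono) (simp_all add: divide_le_eq mult.commute)
  moreover have "total_weight \<alpha> n r e' = z - (1 - 1 / \<alpha>) * W - card D / \<alpha>"
    using total_weight_after_mistake[where \<alpha> = \<alpha> and x = x and p = p and e = e and n = n and r = r] \<alpha>
    by (simp add: e'_def D_def z_def W_def diff_divide_distrib algebra_simps)
  ultimately have "total_weight \<alpha> n r e' \<le> z - (1 - 1 / \<alpha>) * z / m - card D / \<alpha>"
    by simp
  moreover have "0 < total_weight \<alpha> n r e'"
    using card_survivors_le_total_weight[OF \<alpha>, of n r e'] card' \<open>1 \<le> A - card D\<close> by simp
  ultimately have "mistake_bound \<alpha> m' (total_weight \<alpha> n r e') + 1 \<le> mistake_bound \<alpha> m z"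
    using mistake_bound_decrease[OF \<alpha> m' z] by blast
  then show ?thesis
    by (simp add: potential_def card' m_def m'_def z_def A_def)
qed

lemma expert_errors_eq_length_filter:
  "expert_errors i S = length (filter (\<lambda>(x, y). x ! i \<noteq> y) S)"
  unfolding expert_errors_def length_filter_conv_card by (simp add: case_prod_beta)

lemma mistakes_weighted_majority_le_potential:
  assumes \<alpha>: "1 < \<alpha>" and k: "1 \<le> k" and "i < n"
    and "\<forall>(x, y) \<in> set S. x \<in> instances n k"
    and "known_errors h i + expert_errors i S \<le> r"
  shows "real (mistakes (weighted_majority \<alpha> n k r) h S) \<le> potential \<alpha> n k r (known_errors h)"
  using assms(4,5)
proof (induction S arbitrary: h)
  case Nil
  then have "i \<in> survivors n r (known_errors h)"
    using \<open>i < n\<close> by (simp add: survivors_def)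
  then show ?case
    using potential_nonneg[OF \<alpha> k] by auto
next
  case (Cons xy S)
  obtain x y where xy: "xy = (x, y)" by fastforce
  have x: "x \<in> instances n k" and S: "\<forall>(x, y) \<in> set S. x \<in> instances n k"
    using Cons.prems(1) by (simp_all add: xy)
  define p where "p = weighted_majority \<alpha> n k r h x"
  show ?case
  proof (cases "p = y")
    case True
    define h' where "h' = h @ [(x, p, True)]"
    have budget: "known_errors h' i + expert_errors i S \<le> r"
      using Cons.prems(2) by (auto simp: xy h'_def expert_errors_eq_length_filter split: if_splits)
    moreover have "mistakes (weighted_majority \<alpha> n k r) h (xy # S) =
        mistakes (weighted_majority \<alpha> n k r) h' S"
      using True by (simp add: xy h'_def p_def)
    ultimately show ?thesis
      using Cons.IH[OF S budget] by (simp add: h'_def)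
  next
    case False
    define h' where "h' = h @ [(x, p, False)]"
    have budget: "known_errors h' i + expert_errors i S \<le> r"
      using Cons.prems(2) False
      by (auto simp: xy h'_def expert_errors_eq_length_filter split: if_splits)
    have labels: "\<forall>j<n. x ! j \<in> {1..k}"
      using x unfolding instances_def using nth_mem by blast
    have "i \<in> survivors n r (known_errors h')"
      using budget \<open>i < n\<close> by (simp add: survivors_def)
    then have "potential \<alpha> n k r (known_errors h') + 1 \<le> potential \<alpha> n k r (known_errors h)"
      unfolding h'_def known_errors_append_wrong p_def
      using weighted_majority_spec(2)[OF k] labels
      by (intro potential_after_mistake[OF \<alpha> k]) auto
    moreover have "mistakes (weighted_majority \<alpha> n k r) h (xy # S) =
        1 + mistakes (weighted_majority \<alpha> n k r) h' S"
      using False by (simp add: xy h'_def p_def)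
    ultimately show ?thesis
      using Cons.IH[OF S budget] by simp
  qed
qed

theorem lemma4p2:
  fixes n k r :: nat and \<alpha> :: real
  assumes "2 \<le> k" and "k \<le> n" and "1 < \<alpha>"
  shows "opt_bandit_det n k r \<le>
    ereal (\<alpha> / (\<alpha> - 1) * real k * ln (real n * \<alpha> ^ r / real k) + real k - 1)"
proof -
  have k: "1 \<le> k" using assms(1) by simp
  let ?L = "weighted_majority \<alpha> n k r"
  have "?L \<in> learners k"
    using weighted_majority_spec(1)[OF k] by (simp add: learners_def)
  then have "opt_bandit_det n k r \<le> (SUP S \<in> realizable_seqs n k r. ereal (real (mistakes ?L [] S)))"
    unfolding opt_bandit_det_def by (rule INF_lower)
  also have "\<dots> \<le> ereal (mistake_bound \<alpha> k (n * \<alpha> ^ r))"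
  proof (rule SUP_least)
    fix S assume "S \<in> realizable_seqs n k r"
    then obtain i where "i < n" "expert_errors i S \<le> r" "\<forall>(x, y) \<in> set S. x \<in> instances n k"
      unfolding realizable_seqs_def by blast
    then have "real (mistakes ?L [] S) \<le> potential \<alpha> n k r (known_errors [])"
      by (intro mistakes_weighted_majority_le_potential[OF assms(3) k]) simp_all
    then show "ereal (real (mistakes ?L [] S)) \<le> ereal (mistake_bound \<alpha> k (n * \<alpha> ^ r))"
      using potential_initial[OF assms(2)] by simp
  qed
  finally show ?thesis
    unfolding mistake_bound_def .
qed

end
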